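(* Let $n \ge 3$, let $k,\ell \in \mathbb{N}_0$, $1 \le a_1 < \cdots < a_k < n$, $0 \le b_1 < \cdots < b_\ell < n$, and suppose the set $C=\{r^{a_1},\ldots,r^{a_k}, r^{b_1}s, \ldots, r^{b_\ell}s\}$ is closed under inversion in $\mathrm{Dih}(n)$. Let $G = \mathrm{Cay}(\mathrm{Dih}(n), C)$. For each $n$-th root of unity $\zeta$ let \[ A_\zeta = \begin{bmatrix} \sum_{j=1}^k \zeta^{a_j} & \sum_{j=1}^\ell \zeta^{-b_j} \\ \sum_{j=1}^\ell \zeta^{b_j} & \sum_{j=1}^k \zeta^{a_j}\end{bmatrix}. \] Then $G$ is a nut graph if and only if exactly one of the matrices $A_\zeta$ has $0$ as a simple eigenvalue, while all the other $A_\zeta$ are invertible.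
   Context: $\mathrm{Dih}(n) = \langle r, s \mid r^n = s^2 = e,\ srs = r^{-1}\rangle$ is the dihedral group of order $2n$. For a finite group $\Gamma$ with identity $e$ and $C \subseteq \Gamma\setminus\{e\}$ closed under inversion, $\mathrm{Cay}(\Gamma, C)$ is the graph with vertex set $\Gamma$ in which $u,v$ are adjacent iff $vu^{-1}\in C$. A nut graph is a graph with at least two vertices whose adjacency matrix has eigenvalue $0$ with multiplicity exactly one, such that the corresponding eigenvector has no zero entries. *)

theory Defs
  imports "Jordan_Normal_Form.Char_Poly" "HOL-Computational_Algebra.Polynomial"
begin

text \<open>Dihedral group Dih(n) of order 2n. The element r^i s^t (0 \<le> i < n, t \<in> {0,1})
  is represented by the pair (i, t) with t :: bool (True meaning the factor s is present).\<close>

definition dih_carrier :: "nat \<Rightarrow> (nat \<times> bool) set" where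
  "dih_carrier n = {0..<n} \<times> UNIV"

definition dih_e :: "(nat \<times> bool)" where
  "dih_e = (0, False)"

text \<open>(r^i s^a)(r^j s^b) = r^(i + (-1)^a j) s^(a+b), using s r^j = r^(-j) s.\<close>
definition dih_mult :: "nat \<Rightarrow> (nat \<times> bool) \<Rightarrow> (nat \<times> bool) \<Rightarrow> (nat \<times> bool)" where
  "dih_mult n x y = (case x of (i, a) \<Rightarrow> case y of (j, b) \<Rightarrow>
     ((if a then i + (n - j) else i + j) mod n, a \<noteq> b))"

definition dih_inv :: "nat \<Rightarrow> (nat \<times> bool) \<Rightarrow> (nat \<times> bool)" where
  "dih_inv n x = (case x of (i, a) \<Rightarrow> if a then (i, True) else ((n - i) mod n, False))"

definition dih_cay_adj :: "nat \<Rightarrow> (nat \<times> bool) set \<Rightarrow> (nat \<times> bool) \<Rightarrow> (nat \<times> bool) \<Rightarrow> bool" where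
  "dih_cay_adj n C u v \<longleftrightarrow> dih_mult n v (dih_inv n u) \<in> C"

definition dih_vertex :: "nat \<Rightarrow> nat \<Rightarrow> (nat \<times> bool)" where
  "dih_vertex n k = (k mod n, n \<le> k)"

definition dih_cay_adj_matrix :: "nat \<Rightarrow> (nat \<times> bool) set \<Rightarrow> real mat" where
  "dih_cay_adj_matrix n C = mat (2 * n) (2 * n)
     (\<lambda>(k, l). if dih_cay_adj n C (dih_vertex n k) (dih_vertex n l) then 1 else 0)"

definition mult_zero_eig :: "'a :: field mat \<Rightarrow> nat" where
  "mult_zero_eig M = order 0 (char_poly M)"

definition is_nut_adj :: "real mat \<Rightarrow> bool" where
  "is_nut_adj M \<longleftrightarrow> dim_row M \<ge> 2 \<and> mult_zero_eig M = 1 \<and>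
     (\<forall>v \<in> carrier_vec (dim_col M). v \<noteq> 0\<^sub>v (dim_col M) \<and> M *\<^sub>v v = 0\<^sub>v (dim_row M)
        \<longrightarrow> (\<forall>i < dim_col M. v $ i \<noteq> 0))"

definition dih_conn :: "nat set \<Rightarrow> nat set \<Rightarrow> (nat \<times> bool) set" where
  "dih_conn A B = (\<lambda>a. (a, False)) ` A \<union> (\<lambda>b. (b, True)) ` B"

definition A_zeta :: "nat set \<Rightarrow> nat set \<Rightarrow> complex \<Rightarrow> complex mat" where
  "A_zeta A B z = mat 2 2 (\<lambda>(i, j).
     if i = j then (\<Sum>a\<in>A. z ^ a)
     else if i = 0 then (\<Sum>b\<in>B. inverse z ^ b)
     else (\<Sum>b\<in>B. z ^ b))"

end

theory Submission
  imports Defs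
begin

text \<open>Order the vertices as r^0, ..., r^(n-1), r^0 s, ..., r^(n-1) s. The adjacency matrix is
  then [X H; H X] with X circulant (the rotations in C) and H anti-circulant (the reflections in C).
  Conjugating by diag(F(\<omega>), F(\<omega>^-1)), with F the Fourier matrix of a primitive n-th root of unity
  \<omega>, makes all four quadrants diagonal, and their k-th diagonal entries form A_\<zeta> for \<zeta> = \<omega>^k.
  So the characteristic polynomial of the graph is the product of those of the A_\<zeta>, and the
  multiplicity of the eigenvalue 0 is the sum of theirs; it is 1 exactly when one A_\<zeta> has 0 as a
  simple eigenvalue and all others are invertible. In that case the kernel of the conjugated matrix
  is spanned by a vector supported on the two coordinates of that \<zeta>, both nonzero because the
  diagonal entry of A_\<zeta> is nonzero; transforming back, every entry of a kernel vector is a root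
  of unity times one of these two numbers.\<close>

section \<open>Circulant matrices and the discrete Fourier transform\<close>

definition pow_sum :: "nat set \<Rightarrow> 'a :: comm_semiring_1 \<Rightarrow> 'a" where
  "pow_sum S z = (\<Sum>s\<in>S. z ^ s)"

lemma power_mod_root_unity:
  fixes z :: "'a :: comm_monoid_mult"
  assumes "z ^ n = 1" shows "z ^ (m mod n) = z ^ m"
proof -
  have "z ^ m = z ^ (n * (m div n) + m mod n)" by simp
  also have "\<dots> = (z ^ n) ^ (m div n) * z ^ (m mod n)" by (simp only: power_add power_mult)
  finally show ?thesis using assms by simp
qed

lemma root_unity_power_root_unity:
  fixes z :: "'a :: comm_monoid_mult"
  assumes "z ^ n = 1" shows "(z ^ k) ^ n = 1"
  using assms by (metis power_mult mult.commute power_one)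

lemma circulant_row_sum:
  fixes u :: "'a :: comm_ring_1"
  assumes u: "u ^ n = 1" and i: "i < n" and S: "S \<subseteq> {..<n}"
  shows "(\<Sum>j = 0..<n. (if (j + n - i) mod n \<in> S then 1 else 0) * u ^ j) = u ^ i * pow_sum S u"
proof -
  have "(\<Sum>j = 0..<n. (if (j + n - i) mod n \<in> S then 1 else 0) * u ^ j)
      = (\<Sum>j \<in> {j \<in> {0..<n}. (j + n - i) mod n \<in> S}. u ^ j)"
    by (subst sum.inter_filter[OF finite_atLeastLessThan]) (rule sum.cong, simp_all)
  also have "\<dots> = (\<Sum>s\<in>S. u ^ (i + s))"
  proof (rule sym, rule sum.reindex_bij_witness[where j = "\<lambda>s. (i + s) mod n" and i = "\<lambda>j. (j + n - i) mod n"])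
    fix s assume s: "s \<in> S"
    then have "s < n" using S by auto
    then show "((i + s) mod n + n - i) mod n = s" using i by (cases "i + s < n") (simp_all add: mod_if)
    then show "(i + s) mod n \<in> {j \<in> {0..<n}. (j + n - i) mod n \<in> S}" using s i by auto
    show "u ^ ((i + s) mod n) = u ^ (i + s)" using power_mod_root_unity[OF u] .
  next
    fix j assume j: "j \<in> {j \<in> {0..<n}. (j + n - i) mod n \<in> S}"
    then show "(j + n - i) mod n \<in> S" by auto
    show "(i + (j + n - i) mod n) mod n = j" using j i by (simp add: mod_add_right_eq)
  qed
  also have "\<dots> = u ^ i * pow_sum S u" by (simp add: pow_sum_def power_add sum_distrib_left)
  finally show ?thesis .
qed

lemma anticirculant_row_sum:
  fixes u :: "'a :: field"
  assumes u: "u ^ n = 1" and i: "i < n" and S: "S \<subseteq> {..<n}"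
  shows "(\<Sum>j = 0..<n. (if (i + j) mod n \<in> S then 1 else 0) * u ^ j) = inverse u ^ i * pow_sum S u"
proof -
  have "(\<Sum>j = 0..<n. (if (i + j) mod n \<in> S then 1 else 0) * u ^ j)
      = (\<Sum>j \<in> {j \<in> {0..<n}. (i + j) mod n \<in> S}. u ^ j)"
    by (subst sum.inter_filter[OF finite_atLeastLessThan]) (rule sum.cong, simp_all)
  also have "\<dots> = (\<Sum>s\<in>S. u ^ (s + n - i))"
  proof (rule sym, rule sum.reindex_bij_witness[where j = "\<lambda>s. (s + n - i) mod n" and i = "\<lambda>j. (i + j) mod n"])
    fix s assume s: "s \<in> S"
    then have "s < n" using S by auto
    then show "(i + (s + n - i) mod n) mod n = s" using i by (simp add: mod_add_right_eq)
    then show "(s + n - i) mod n \<in> {j \<in> {0..<n}. (i + j) mod n \<in> S}" using s i by simp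
    show "u ^ ((s + n - i) mod n) = u ^ (s + n - i)" using power_mod_root_unity[OF u] .
  next
    fix j assume j: "j \<in> {j \<in> {0..<n}. (i + j) mod n \<in> S}"
    then show "(i + j) mod n \<in> S" by auto
    show "((i + j) mod n + n - i) mod n = j" using j i by (cases "i + j < n") (auto simp: mod_if)
  qed
  also have "\<dots> = (\<Sum>s\<in>S. inverse u ^ i * u ^ s)"
  proof (rule sum.cong[OF refl])
    fix s assume "s \<in> S"
    have "u \<noteq> 0" using u i by (metis gr_implies_not0 power_0_left zero_neq_one)
    moreover have "u ^ (s + n - i) * u ^ i = u ^ s" using u i by (simp flip: power_add) (simp add: power_add)
    ultimately show "u ^ (s + n - i) = inverse u ^ i * u ^ s"
      by (simp add: power_inverse field_simps)
  qed
  also have "\<dots> = inverse u ^ i * pow_sum S u" by (simp add: pow_sum_def sum_distrib_left)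
  finally show ?thesis .
qed

lemma pow_sum_inverse_eq:
  fixes u :: "'a :: field"
  assumes u: "u ^ n = 1" and S: "S \<subseteq> {1..<n}" and S_closed: "\<forall>s\<in>S. n - s \<in> S"
  shows "pow_sum S (inverse u) = pow_sum S u"
  unfolding pow_sum_def
proof (rule sum.reindex_bij_witness[where i = "\<lambda>s. n - s" and j = "\<lambda>s. n - s"])
  fix s assume s: "s \<in> S"
  then show "n - (n - s) = s" using S by auto
  show "n - s \<in> S" using S_closed s by blast
  have "s + (n - s) = n" using s S by auto
  then have "u ^ s * u ^ (n - s) = 1" using u by (simp flip: power_add)
  then have "inverse (u ^ s) = u ^ (n - s)" by (rule inverse_unique)
  then show "u ^ (n - s) = inverse u ^ s" by (simp add: power_inverse)
next
  fix s assume s: "s \<in> S"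
  then show "n - (n - s) = s" using S by auto
  show "n - s \<in> S" using S_closed s by blast
qed

(* (j + n - i) mod n is j - i modulo n, written so that the subtraction on nat does not truncate. *)
definition circulant_mat :: "nat \<Rightarrow> nat set \<Rightarrow> 'a :: {zero, one} mat" where
  "circulant_mat n S = mat n n (\<lambda>(i, j). if (j + n - i) mod n \<in> S then 1 else 0)"

definition anticirculant_mat :: "nat \<Rightarrow> nat set \<Rightarrow> 'a :: {zero, one} mat" where
  "anticirculant_mat n S = mat n n (\<lambda>(i, j). if (i + j) mod n \<in> S then 1 else 0)"

definition fourier_mat :: "nat \<Rightarrow> 'a :: comm_ring_1 \<Rightarrow> 'a mat" where
  "fourier_mat n z = mat n n (\<lambda>(i, k). (z ^ k) ^ i)"

lemma circulant_mat_carrier [simp]: "circulant_mat n S \<in> carrier_mat n n"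
  and anticirculant_mat_carrier [simp]: "anticirculant_mat n S \<in> carrier_mat n n"
  and fourier_mat_carrier [simp]: "fourier_mat n z \<in> carrier_mat n n"
  by (simp_all add: circulant_mat_def anticirculant_mat_def fourier_mat_def)

lemma circulant_mat_dim [simp]: "dim_row (circulant_mat n S) = n" "dim_col (circulant_mat n S) = n"
  and anticirculant_mat_dim [simp]: "dim_row (anticirculant_mat n S) = n" "dim_col (anticirculant_mat n S) = n"
  and fourier_mat_dim [simp]: "dim_row (fourier_mat n z) = n" "dim_col (fourier_mat n z) = n"
  by (simp_all add: circulant_mat_def anticirculant_mat_def fourier_mat_def)

lemma dim_mat_diag [simp]: "dim_row (mat_diag n f) = n" "dim_col (mat_diag n f) = n"
  by (simp_all add: mat_diag_def)

lemma mult_mat_vec_index_supported: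
  assumes M: "M \<in> carrier_mat nr nc" and v: "v \<in> carrier_vec nc" and i: "i < nr"
    and S: "S \<subseteq> {..<nc}" and outside: "\<And>j. j < nc \<Longrightarrow> j \<notin> S \<Longrightarrow> M $$ (i, j) * v $ j = 0"
  shows "(M *\<^sub>v v) $ i = (\<Sum>j\<in>S. M $$ (i, j) * v $ j)"
proof -
  have "(M *\<^sub>v v) $ i = (\<Sum>j\<in>{..<nc}. M $$ (i, j) * v $ j)"
    using M v i by (auto simp: scalar_prod_def atLeast0LessThan intro!: sum.cong)
  also have "\<dots> = (\<Sum>j\<in>S. M $$ (i, j) * v $ j)"
    using S outside by (intro sum.mono_neutral_right) auto
  finally show ?thesis .
qed

lemma circulant_mult_fourier:
  fixes z :: "'a :: comm_ring_1"
  assumes z: "z ^ n = 1" and S: "S \<subseteq> {..<n}"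
  shows "circulant_mat n S * fourier_mat n z = fourier_mat n z * mat_diag n (\<lambda>k. pow_sum S (z ^ k))"
proof (rule eq_matI)
  fix i k assume "i < dim_row (fourier_mat n z * mat_diag n (\<lambda>k. pow_sum S (z ^ k)))"
    and "k < dim_col (fourier_mat n z * mat_diag n (\<lambda>k. pow_sum S (z ^ k)))"
  then have i: "i < n" and k: "k < n" by simp_all
  have "(circulant_mat n S * fourier_mat n z) $$ (i, k)
      = (\<Sum>j = 0..<n. (if (j + n - i) mod n \<in> S then 1 else 0) * (z ^ k) ^ j)"
    using i k by (simp add: circulant_mat_def fourier_mat_def scalar_prod_def)
  also have "\<dots> = (z ^ k) ^ i * pow_sum S (z ^ k)"
    by (rule circulant_row_sum[OF root_unity_power_root_unity[OF z] i S])
  finally show "(circulant_mat n S * fourier_mat n z) $$ (i, k)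
      = (fourier_mat n z * mat_diag n (\<lambda>k. pow_sum S (z ^ k))) $$ (i, k)"
    using i k by (simp add: mat_diag_mult_right[of _ n n] fourier_mat_def)
qed simp_all

lemma anticirculant_mult_fourier:
  fixes z :: "'a :: field"
  assumes z: "z ^ n = 1" and S: "S \<subseteq> {..<n}"
  shows "anticirculant_mat n S * fourier_mat n z = fourier_mat n (inverse z) * mat_diag n (\<lambda>k. pow_sum S (z ^ k))"
proof (rule eq_matI)
  fix i k assume "i < dim_row (fourier_mat n (inverse z) * mat_diag n (\<lambda>k. pow_sum S (z ^ k)))"
    and "k < dim_col (fourier_mat n (inverse z) * mat_diag n (\<lambda>k. pow_sum S (z ^ k)))"
  then have i: "i < n" and k: "k < n" by simp_all
  have "(anticirculant_mat n S * fourier_mat n z) $$ (i, k)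
      = (\<Sum>j = 0..<n. (if (i + j) mod n \<in> S then 1 else 0) * (z ^ k) ^ j)"
    using i k by (simp add: anticirculant_mat_def fourier_mat_def scalar_prod_def)
  also have "\<dots> = inverse (z ^ k) ^ i * pow_sum S (z ^ k)"
    by (rule anticirculant_row_sum[OF root_unity_power_root_unity[OF z] i S])
  finally show "(anticirculant_mat n S * fourier_mat n z) $$ (i, k)
      = (fourier_mat n (inverse z) * mat_diag n (\<lambda>k. pow_sum S (z ^ k))) $$ (i, k)"
    using i k by (simp add: mat_diag_mult_right[of _ n n] fourier_mat_def power_inverse)
qed simp_all

lemma sum_powers_ratio_primitive_root:
  fixes z :: "'a :: field"
  assumes z: "z ^ n = 1" and inj: "inj_on (\<lambda>k. z ^ k) {..<n}" and a: "a < n" and b: "b < n"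
  shows "(\<Sum>j<n. (z ^ a * inverse (z ^ b)) ^ j) = (if a = b then of_nat n else 0)"
proof -
  have "z \<noteq> 0" using z a by (metis gr_implies_not0 power_0_left zero_neq_one)
  show ?thesis
  proof (cases "a = b")
    case False
    let ?u = "z ^ a * inverse (z ^ b)"
    have "?u \<noteq> 1" using False inj_onD[OF inj, of a b] a b by (auto simp: field_simps)
    moreover have "?u ^ n = 1"
      using root_unity_power_root_unity[OF z] by (simp add: power_mult_distrib power_inverse)
    ultimately show ?thesis using False by (simp add: geometric_sum)
  qed (simp add: \<open>z \<noteq> 0\<close>)
qed

lemma fourier_mat_inverse_mult:
  fixes z :: "'a :: field"
  assumes z: "z ^ n = 1" and inj: "inj_on (\<lambda>k. z ^ k) {..<n}"
  shows "fourier_mat n (inverse z) * fourier_mat n z = of_nat n \<cdot>\<^sub>m 1\<^sub>m n"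
proof (rule eq_matI)
  fix i k assume "i < dim_row (of_nat n \<cdot>\<^sub>m 1\<^sub>m n :: 'a mat)" "k < dim_col (of_nat n \<cdot>\<^sub>m 1\<^sub>m n :: 'a mat)"
  then have i: "i < n" and k: "k < n" by simp_all
  have "(fourier_mat n (inverse z) * fourier_mat n z) $$ (i, k)
      = (\<Sum>j<n. (inverse z ^ j) ^ i * (z ^ k) ^ j)"
    using i k by (simp add: fourier_mat_def scalar_prod_def atLeast0LessThan)
  also have "\<dots> = (\<Sum>j<n. (z ^ k * inverse (z ^ i)) ^ j)"
    by (rule sum.cong[OF refl]) (metis power_mult mult.commute power_mult_distrib power_inverse)
  finally show "(fourier_mat n (inverse z) * fourier_mat n z) $$ (i, k) = (of_nat n \<cdot>\<^sub>m 1\<^sub>m n) $$ (i, k)"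
    using sum_powers_ratio_primitive_root[OF z inj k i] i k by auto
qed simp_all

definition prim_root :: "nat \<Rightarrow> complex" where
  "prim_root n = cis (2 * pi / n)"

lemma prim_root_power: "prim_root n ^ k = cis (2 * pi * k / n)"
  unfolding prim_root_def DeMoivre by (simp add: field_simps)

lemma bij_betw_prim_root_powers:
  assumes "n > 0" shows "bij_betw (\<lambda>k. prim_root n ^ k) {..<n} {z. z ^ n = 1}"
  unfolding prim_root_power using bij_betw_roots_unity[OF assms] .

lemma prim_root_power_n: "n > 0 \<Longrightarrow> prim_root n ^ n = 1"
  by (simp add: prim_root_power)

lemma inj_on_prim_root_powers: "n > 0 \<Longrightarrow> inj_on (\<lambda>k. prim_root n ^ k) {..<n}"
  using bij_betw_prim_root_powers bij_betw_def by blast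

lemma inj_on_inverse_prim_root_powers: "n > 0 \<Longrightarrow> inj_on (\<lambda>k. inverse (prim_root n) ^ k) {..<n}"
  using inj_on_prim_root_powers by (auto simp: inj_on_def power_inverse)

lemma prim_root_nonzero [simp]: "prim_root n \<noteq> 0"
  by (simp add: prim_root_def)

lemma roots_unity_unique_iff_sum_eq_1:
  fixes m :: "complex \<Rightarrow> nat"
  assumes n: "n > 0" and zero_iff: "\<And>z. m z = 0 \<longleftrightarrow> P z"
  shows "((\<exists>!z. z ^ n = 1 \<and> m z = 1) \<and> (\<forall>z. z ^ n = 1 \<and> m z \<noteq> 1 \<longrightarrow> P z))
    \<longleftrightarrow> (\<Sum>k<n. m (prim_root n ^ k)) = 1" (is "?lhs \<longleftrightarrow> _")
proof -
  let ?R = "{z :: complex. z ^ n = 1}"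
  have "?lhs \<longleftrightarrow> (\<exists>z\<in>?R. m z = 1 \<and> (\<forall>y\<in>?R. z \<noteq> y \<longrightarrow> m y = 0))" (is "_ \<longleftrightarrow> ?rhs")
  proof
    assume lhs: ?lhs
    then obtain z where z: "z ^ n = 1" "m z = 1" and uniq: "\<And>y. y ^ n = 1 \<Longrightarrow> m y = 1 \<Longrightarrow> y = z"
      by blast
    have "m y = 0" if "y ^ n = 1" "z \<noteq> y" for y
      using lhs uniq[of y] that zero_iff by auto
    then show ?rhs using z by blast
  next
    assume ?rhs
    then obtain z where z: "z ^ n = 1" "m z = 1" and others: "\<And>y. y ^ n = 1 \<Longrightarrow> z \<noteq> y \<Longrightarrow> m y = 0"
      by blast
    have "y = z" if "y ^ n = 1" "m y = 1" for y
      using others[of y] that by force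
    moreover have "P y" if "y ^ n = 1" "m y \<noteq> 1" for y
      using others[of y] that z zero_iff by force
    ultimately show ?lhs using z by blast
  qed
  also have "\<dots> \<longleftrightarrow> (\<Sum>z\<in>?R. m z) = 1"
    by (rule sum_eq_1_iff[symmetric], rule bij_betw_finite[OF bij_betw_prim_root_powers[OF n], THEN iffD1]) simp
  also have "(\<Sum>z\<in>?R. m z) = (\<Sum>k<n. m (prim_root n ^ k))"
    by (rule sum.reindex_bij_betw[OF bij_betw_prim_root_powers[OF n], symmetric])
  finally show ?thesis .
qed

definition fourier_block_mat :: "nat \<Rightarrow> complex mat" where
  "fourier_block_mat n = four_block_mat (fourier_mat n (prim_root n)) (0\<^sub>m n n)
     (0\<^sub>m n n) (fourier_mat n (inverse (prim_root n)))"

definition fourier_block_mat_inv :: "nat \<Rightarrow> complex mat" where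
  "fourier_block_mat_inv n = four_block_mat ((1 / of_nat n) \<cdot>\<^sub>m fourier_mat n (inverse (prim_root n))) (0\<^sub>m n n)
     (0\<^sub>m n n) ((1 / of_nat n) \<cdot>\<^sub>m fourier_mat n (prim_root n))"

lemma fourier_block_mat_carrier [simp]: "fourier_block_mat n \<in> carrier_mat (n + n) (n + n)"
  and fourier_block_mat_inv_carrier [simp]: "fourier_block_mat_inv n \<in> carrier_mat (n + n) (n + n)"
  by (simp_all add: fourier_block_mat_def fourier_block_mat_inv_def)

lemma fourier_block_mat_inv_mult:
  assumes n: "n > 0" shows "fourier_block_mat_inv n * fourier_block_mat n = 1\<^sub>m (n + n)"
proof -
  let ?F = "fourier_mat n (prim_root n)" and ?G = "fourier_mat n (inverse (prim_root n))"
  have scale: "(1 / of_nat n) \<cdot>\<^sub>m (of_nat n \<cdot>\<^sub>m 1\<^sub>m n) = (1\<^sub>m n :: complex mat)"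
    using n by (intro eq_matI) auto
  have "(1 / of_nat n) \<cdot>\<^sub>m ?G * ?F = 1\<^sub>m n"
    using fourier_mat_inverse_mult[OF prim_root_power_n[OF n] inj_on_prim_root_powers[OF n]] n
    by (simp add: mult_smult_assoc_mat[OF fourier_mat_carrier fourier_mat_carrier] scale)
  moreover have "(1 / of_nat n) \<cdot>\<^sub>m ?F * ?G = 1\<^sub>m n"
    using fourier_mat_inverse_mult[of "inverse (prim_root n)" n] prim_root_power_n[OF n]
      inj_on_inverse_prim_root_powers[OF n] n
    by (simp add: mult_smult_assoc_mat[OF fourier_mat_carrier fourier_mat_carrier] power_inverse scale)
  ultimately show ?thesis
    unfolding fourier_block_mat_def fourier_block_mat_inv_def
    by (subst mult_four_block_mat[OF smult_carrier_mat[OF fourier_mat_carrier] zero_carrier_mat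
          zero_carrier_mat smult_carrier_mat[OF fourier_mat_carrier]
          fourier_mat_carrier zero_carrier_mat zero_carrier_mat fourier_mat_carrier]) auto
qed

lemma fourier_block_mat_mult_inv:
  "n > 0 \<Longrightarrow> fourier_block_mat n * fourier_block_mat_inv n = 1\<^sub>m (n + n)"
  by (rule mat_mult_left_right_inverse[OF _ _ fourier_block_mat_inv_mult]) simp_all

lemma fourier_block_mat_mult_vec_supported:
  assumes w: "w \<in> carrier_vec (n + n)" and k: "k < n"
    and outside: "\<And>j. j < n + n \<Longrightarrow> j \<noteq> k \<Longrightarrow> j \<noteq> n + k \<Longrightarrow> w $ j = 0" and i: "i < n + n"
  shows "(fourier_block_mat n *\<^sub>v w) $ i
    = (if i < n then (prim_root n ^ k) ^ i * w $ k else (inverse (prim_root n) ^ k) ^ (i - n) * w $ (n + k))"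
proof -
  have "(fourier_block_mat n *\<^sub>v w) $ i = (\<Sum>j\<in>{k, n + k}. fourier_block_mat n $$ (i, j) * w $ j)"
    using mult_mat_vec_index_supported[OF fourier_block_mat_carrier w i, of "{k, n + k}"] outside k by auto
  then show ?thesis using i k by (simp add: fourier_block_mat_def fourier_mat_def)
qed

section \<open>Matrices with diagonal quadrants\<close>

lemma similar_kernel:
  fixes M :: "'a :: comm_ring_1 mat"
  assumes M: "M \<in> carrier_mat m m" and D: "D \<in> carrier_mat m m"
    and P: "P \<in> carrier_mat m m" and Q: "Q \<in> carrier_mat m m"
    and MP: "M * P = P * D" and QP: "Q * P = 1\<^sub>m m" and PQ: "P * Q = 1\<^sub>m m"
    and v: "v \<in> carrier_vec m" and Mv: "M *\<^sub>v v = 0\<^sub>v m"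
  shows "D *\<^sub>v (Q *\<^sub>v v) = 0\<^sub>v m" and "P *\<^sub>v (Q *\<^sub>v v) = v"
proof -
  have "P *\<^sub>v (Q *\<^sub>v v) = (P * Q) *\<^sub>v v" using assoc_mult_mat_vec[OF P Q v] by simp
  then show PQv: "P *\<^sub>v (Q *\<^sub>v v) = v" using PQ v by simp
  have "D = Q * (M * P)"
    using MP QP D P Q by (simp add: assoc_mult_mat[OF Q P D, symmetric])
  then have "D *\<^sub>v (Q *\<^sub>v v) = Q *\<^sub>v ((M * P) *\<^sub>v (Q *\<^sub>v v))"
    using assoc_mult_mat_vec[OF Q mult_carrier_mat[OF M P] mult_mat_vec_carrier[OF Q v]] by simp
  also have "(M * P) *\<^sub>v (Q *\<^sub>v v) = M *\<^sub>v (P *\<^sub>v (Q *\<^sub>v v))"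
    using assoc_mult_mat_vec[OF M P mult_mat_vec_carrier[OF Q v]] .
  also have "Q *\<^sub>v (M *\<^sub>v (P *\<^sub>v (Q *\<^sub>v v))) = 0\<^sub>v m" using PQv Mv Q by auto
  finally show "D *\<^sub>v (Q *\<^sub>v v) = 0\<^sub>v m" .
qed

lemma det_mat_diag: "det (mat_diag n f) = (\<Prod>k<n. f k :: 'a :: comm_ring_1)"
  by (subst det_upper_triangular[of _ n])
     (auto simp: mat_diag_def prod_list_diag_prod atLeast0LessThan intro!: prod.cong)

lemma det_dim_2:
  fixes A :: "'a :: comm_ring_1 mat"
  assumes A: "A \<in> carrier_mat 2 2"
  shows "det A = A $$ (0, 0) * A $$ (1, 1) - A $$ (0, 1) * A $$ (1, 0)"
proof -
  have "det A = (\<Sum>i<2. A $$ (i, 0) * cofactor A i 0)" by (rule laplace_expansion_column[OF A]) simp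
  also have "\<dots> = A $$ (0, 0) * cofactor A 0 0 + A $$ (1, 0) * cofactor A 1 0"
    by (simp add: numeral_2_eq_2)
  also have "cofactor A 0 0 = A $$ (1, 1)"
    unfolding cofactor_def using A by (subst det_single) (auto simp: mat_delete_def)
  also have "cofactor A 1 0 = - A $$ (0, 1)"
    unfolding cofactor_def using A by (subst det_single) (auto simp: mat_delete_def)
  finally show ?thesis by (simp add: algebra_simps)
qed

lemma char_poly_dim_2:
  fixes A :: "'a :: comm_ring_1 mat"
  assumes A: "A \<in> carrier_mat 2 2"
  shows "char_poly A = [:det A, - (A $$ (0, 0) + A $$ (1, 1)), 1:]"
  using A unfolding char_poly_def
  by (subst det_dim_2) (auto simp: det_dim_2[OF A] char_poly_matrix_def algebra_simps)

(* Up to the perfect shuffle of coordinates, quadrant_diag_mat n Z is the block diagonal matrix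
   with the 2x2 blocks Z 0, ..., Z (n - 1). *)
definition quadrant_diag_mat :: "nat \<Rightarrow> (nat \<Rightarrow> 'a :: zero mat) \<Rightarrow> 'a mat" where
  "quadrant_diag_mat n Z = four_block_mat
     (mat_diag n (\<lambda>k. Z k $$ (0, 0))) (mat_diag n (\<lambda>k. Z k $$ (0, 1)))
     (mat_diag n (\<lambda>k. Z k $$ (1, 0))) (mat_diag n (\<lambda>k. Z k $$ (1, 1)))"

lemma quadrant_diag_mat_carrier [simp]: "quadrant_diag_mat n Z \<in> carrier_mat (n + n) (n + n)"
  by (simp add: quadrant_diag_mat_def)

lemma char_poly_quadrant_diag_mat:
  fixes Z :: "nat \<Rightarrow> 'a :: idom mat"
  assumes Z: "\<And>k. k < n \<Longrightarrow> Z k \<in> carrier_mat 2 2"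
  shows "char_poly (quadrant_diag_mat n Z) = (\<Prod>k<n. char_poly (Z k))"
proof -
  let ?a = "\<lambda>i j k. Z k $$ (i, j)"
  have "char_poly_matrix (quadrant_diag_mat n Z) = four_block_mat
      (mat_diag n (\<lambda>k. [:- ?a 0 0 k, 1:])) (mat_diag n (\<lambda>k. [:- ?a 0 1 k:]))
      (mat_diag n (\<lambda>k. [:- ?a 1 0 k:])) (mat_diag n (\<lambda>k. [:- ?a 1 1 k, 1:]))"
    unfolding char_poly_matrix_def quadrant_diag_mat_def by (rule eq_matI) (auto simp: mat_diag_def)
  then have "char_poly (quadrant_diag_mat n Z) = det (four_block_mat
      (mat_diag n (\<lambda>k. [:- ?a 0 0 k, 1:])) (mat_diag n (\<lambda>k. [:- ?a 0 1 k:]))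
      (mat_diag n (\<lambda>k. [:- ?a 1 0 k:])) (mat_diag n (\<lambda>k. [:- ?a 1 1 k, 1:])))"
    by (simp add: char_poly_def)
  also have "\<dots> = det (mat_diag n (\<lambda>k. [:- ?a 0 0 k, 1:] * [:- ?a 1 1 k, 1:])
      - mat_diag n (\<lambda>k. [:- ?a 0 1 k:] * [:- ?a 1 0 k:]))"
    by (subst det_four_block_mat[of _ n]) (simp_all add: mult.commute)
  also have "\<dots> = det (mat_diag n (\<lambda>k.
      [:- ?a 0 0 k, 1:] * [:- ?a 1 1 k, 1:] - [:- ?a 0 1 k:] * [:- ?a 1 0 k:]))"
    by (rule arg_cong[of _ _ det], rule eq_matI) (simp_all add: mat_diag_def)
  also have "\<dots> = (\<Prod>k<n. char_poly (Z k))"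
    unfolding det_mat_diag
    by (rule prod.cong[OF refl]) (auto simp: char_poly_dim_2 det_dim_2 Z algebra_simps)
  finally show ?thesis .
qed

lemma quadrant_diag_mat_mult_vec:
  assumes w: "w \<in> carrier_vec (n + n)" and k: "k < n"
  shows "(quadrant_diag_mat n Z *\<^sub>v w) $ k = Z k $$ (0, 0) * w $ k + Z k $$ (0, 1) * w $ (n + k)"
    and "(quadrant_diag_mat n Z *\<^sub>v w) $ (n + k) = Z k $$ (1, 0) * w $ k + Z k $$ (1, 1) * w $ (n + k)"
  using k
  by (subst mult_mat_vec_index_supported[OF quadrant_diag_mat_carrier w, where S = "{k, n + k}"];
      auto simp: quadrant_diag_mat_def mat_diag_def)+

lemma quadrant_diag_mat_kernel_support:
  fixes Z :: "nat \<Rightarrow> 'a :: field mat"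
  assumes w: "w \<in> carrier_vec (n + n)" and ker: "quadrant_diag_mat n Z *\<^sub>v w = 0\<^sub>v (n + n)"
    and k: "k < n" and Zk: "Z k \<in> carrier_mat 2 2" and det: "det (Z k) \<noteq> 0"
  shows "w $ k = 0" and "w $ (n + k) = 0"
proof -
  let ?x = "w $ k" and ?y = "w $ (n + k)" and ?a = "\<lambda>i j. Z k $$ (i, j)"
  have e1: "?a 0 0 * ?x + ?a 0 1 * ?y = 0" and e2: "?a 1 0 * ?x + ?a 1 1 * ?y = 0"
    using quadrant_diag_mat_mult_vec[OF w k, of Z] ker k by simp_all
  have "det (Z k) * ?x = ?a 1 1 * (?a 0 0 * ?x + ?a 0 1 * ?y) - ?a 0 1 * (?a 1 0 * ?x + ?a 1 1 * ?y)"
    unfolding det_dim_2[OF Zk] by (simp add: algebra_simps)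
  also have "\<dots> = 0" unfolding e1 e2 by simp
  finally show "?x = 0" using det by simp
  have "det (Z k) * ?y = ?a 0 0 * (?a 1 0 * ?x + ?a 1 1 * ?y) - ?a 1 0 * (?a 0 0 * ?x + ?a 0 1 * ?y)"
    unfolding det_dim_2[OF Zk] by (simp add: algebra_simps)
  also have "\<dots> = 0" unfolding e1 e2 by simp
  finally show "?y = 0" using det by simp
qed

section \<open>Multiplicity of the eigenvalue zero\<close>

lemma order_prod:
  assumes "finite S" and "\<And>i. i \<in> S \<Longrightarrow> (f i :: 'a :: idom poly) \<noteq> 0"
  shows "order a (\<Prod>i\<in>S. f i) = (\<Sum>i\<in>S. order a (f i))"
  using assms by (induction S rule: finite_induct) (simp_all add: order_mult)

lemma order_0_monic_quadratic:
  fixes c0 c1 :: "'a :: idom"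
  shows "order 0 [:c0, c1, 1:] = (if c0 \<noteq> 0 then 0 else if c1 \<noteq> 0 then 1 else 2)"
proof (cases "c0 = 0")
  case True
  have "[:c0, c1, 1:] = [:0, 1:] * [:c1, 1:]" using True by simp
  moreover have "order 0 [:0 :: 'a, 1:] = 1" using order_power_n_n[of "0 :: 'a" 1] by simp
  moreover have "order 0 [:c1, 1:] = (if c1 \<noteq> 0 then 0 else 1)"
    using order_power_n_n[of "0 :: 'a" 1] by (auto simp: order_0I)
  ultimately show ?thesis using True order_mult[of "[:0 :: 'a, 1:]" "[:c1, 1:]" 0] by auto
qed (simp add: order_0I)

lemma mult_zero_eig_dim_2:
  fixes A :: "'a :: field mat"
  assumes "A \<in> carrier_mat 2 2"
  shows "mult_zero_eig A = (if det A \<noteq> 0 then 0 else if A $$ (0, 0) + A $$ (1, 1) \<noteq> 0 then 1 else 2)"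
  unfolding mult_zero_eig_def char_poly_dim_2[OF assms] order_0_monic_quadratic by (auto simp: add_eq_0_iff)

interpretation of_real_poly_hom: map_poly_inj_idom_divide_hom complex_of_real ..

lemma mult_zero_eig_of_real:
  assumes "M \<in> carrier_mat n n"
  shows "mult_zero_eig (map_mat complex_of_real M) = mult_zero_eig M"
  unfolding mult_zero_eig_def of_real_hom.char_poly_hom[OF assms]
  using of_real_poly_hom.order_hom[of 0] by simp

section \<open>The Cayley graph of the dihedral group\<close>

lemma dih_conn_rotation_inverse:
  assumes A: "A \<subseteq> {1..<n}" and closed: "\<forall>x \<in> dih_conn A B. dih_inv n x \<in> dih_conn A B"
  shows "\<forall>a\<in>A. n - a \<in> A"
proof
  fix a assume a: "a \<in> A"
  have "dih_inv n (a, False) \<in> dih_conn A B" using a closed by (auto simp: dih_conn_def)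
  then have "(n - a) mod n \<in> A" by (auto simp: dih_inv_def dih_conn_def)
  moreover have "n - a < n" using a A by auto
  ultimately show "n - a \<in> A" by simp
qed

definition dih_cay_block_mat :: "nat \<Rightarrow> nat set \<Rightarrow> nat set \<Rightarrow> complex mat" where
  "dih_cay_block_mat n A B = four_block_mat (circulant_mat n A) (anticirculant_mat n B)
     (anticirculant_mat n B) (circulant_mat n A)"

lemma dih_cay_block_mat_carrier [simp]: "dih_cay_block_mat n A B \<in> carrier_mat (n + n) (n + n)"
  by (simp add: dih_cay_block_mat_def)

lemma dih_cay_block_mat_index:
  assumes k: "k < n + n" and l: "l < n + n"
  shows "dih_cay_block_mat n A B $$ (k, l)
    = (if dih_mult n (dih_vertex n l) (dih_inv n (dih_vertex n k)) \<in> dih_conn A B then 1 else 0)"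
proof -
  have conn: "(x, False) \<in> dih_conn A B \<longleftrightarrow> x \<in> A" "(x, True) \<in> dih_conn A B \<longleftrightarrow> x \<in> B" for x
    by (auto simp: dih_conn_def)
  show ?thesis
  proof (cases "k < n"; cases "l < n")
    assume "k < n" "l < n"
    moreover have "(l + (n - k) mod n) mod n = (l + n - k) mod n" using \<open>k < n\<close> by (simp add: mod_add_right_eq)
    ultimately show ?thesis
      by (simp add: dih_cay_block_mat_def dih_vertex_def dih_inv_def dih_mult_def circulant_mat_def conn)
  next
    assume "k < n" "\<not> l < n"
    moreover have "(l - n + (n - (n - k) mod n)) mod n = (k + (l - n)) mod n"
      using \<open>k < n\<close> by (cases "k = 0") (simp_all add: add.commute)
    moreover have "l mod n = l - n" using \<open>\<not> l < n\<close> l by (simp add: le_mod_geq)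
    ultimately show ?thesis using l
      by (simp add: dih_cay_block_mat_def dih_vertex_def dih_inv_def dih_mult_def anticirculant_mat_def conn)
  next
    assume "\<not> k < n" "l < n"
    moreover have "k mod n = k - n" using \<open>\<not> k < n\<close> k by (simp add: le_mod_geq)
    ultimately show ?thesis using k
      by (simp add: dih_cay_block_mat_def dih_vertex_def dih_inv_def dih_mult_def anticirculant_mat_def
          conn add.commute)
  next
    assume "\<not> k < n" "\<not> l < n"
    moreover have "k mod n = k - n" "l mod n = l - n"
      using \<open>\<not> k < n\<close> \<open>\<not> l < n\<close> k l by (simp_all add: le_mod_geq)
    moreover have "l - n + (n - (k - n)) = l - n + n - (k - n)" using k by simp
    ultimately show ?thesis using k l
      by (simp add: dih_cay_block_mat_def dih_vertex_def dih_inv_def dih_mult_def circulant_mat_def conn)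
  qed
qed

lemma of_real_dih_cay_adj_matrix:
  "map_mat complex_of_real (dih_cay_adj_matrix n (dih_conn A B)) = dih_cay_block_mat n A B"
proof (rule eq_matI)
  fix k l assume "k < dim_row (dih_cay_block_mat n A B)" "l < dim_col (dih_cay_block_mat n A B)"
  then have k: "k < n + n" and l: "l < n + n" by (auto simp: dih_cay_block_mat_def)
  have "map_mat complex_of_real (dih_cay_adj_matrix n (dih_conn A B)) $$ (k, l)
      = (if dih_mult n (dih_vertex n l) (dih_inv n (dih_vertex n k)) \<in> dih_conn A B then 1 else 0)"
    using k l by (simp add: dih_cay_adj_matrix_def dih_cay_adj_def)
  also have "\<dots> = dih_cay_block_mat n A B $$ (k, l)" using dih_cay_block_mat_index[OF k l] by simp
  finally show "map_mat complex_of_real (dih_cay_adj_matrix n (dih_conn A B)) $$ (k, l)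
      = dih_cay_block_mat n A B $$ (k, l)" .
qed (simp_all add: dih_cay_adj_matrix_def dih_cay_block_mat_def)

lemma A_zeta_carrier [simp]: "A_zeta A B z \<in> carrier_mat 2 2"
  by (simp add: A_zeta_def)

lemma A_zeta_index:
  "A_zeta A B z $$ (0, 0) = pow_sum A z" "A_zeta A B z $$ (0, 1) = pow_sum B (inverse z)"
  "A_zeta A B z $$ (1, 0) = pow_sum B z" "A_zeta A B z $$ (1, 1) = pow_sum A z"
  by (simp_all add: A_zeta_def pow_sum_def)

lemma mult_zero_eig_A_zeta_eq_0_iff: "mult_zero_eig (A_zeta A B z) = 0 \<longleftrightarrow> det (A_zeta A B z) \<noteq> 0"
  unfolding mult_zero_eig_dim_2[OF A_zeta_carrier] by simp

lemma dih_cay_block_mat_mult_fourier: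
  assumes n: "n > 0" and A: "A \<subseteq> {1..<n}" and B: "B \<subseteq> {..<n}" and A_closed: "\<forall>a\<in>A. n - a \<in> A"
  shows "dih_cay_block_mat n A B * fourier_block_mat n
    = fourier_block_mat n * quadrant_diag_mat n (\<lambda>k. A_zeta A B (prim_root n ^ k))"
proof -
  let ?w = "prim_root n"
  let ?F = "fourier_mat n ?w" and ?G = "fourier_mat n (inverse ?w)"
  have w: "?w ^ n = 1" and w': "inverse ?w ^ n = 1" using prim_root_power_n[OF n] by (simp_all add: power_inverse)
  have A': "A \<subseteq> {..<n}" using A by auto
  txt \<open>The symmetry of A is used only here: it makes the two diagonal blocks equal, as in A_\<zeta>.\<close>
  have "pow_sum A (inverse ?w ^ k) = pow_sum A (?w ^ k)" for k
    using pow_sum_inverse_eq[OF root_unity_power_root_unity[OF w] A A_closed] by (simp add: power_inverse)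
  then have XF: "circulant_mat n A * ?F = ?F * mat_diag n (\<lambda>k. pow_sum A (?w ^ k))"
    and XG: "circulant_mat n A * ?G = ?G * mat_diag n (\<lambda>k. pow_sum A (?w ^ k))"
    using circulant_mult_fourier[OF w A'] circulant_mult_fourier[OF w' A'] by simp_all
  have HF: "anticirculant_mat n B * ?F = ?G * mat_diag n (\<lambda>k. pow_sum B (?w ^ k))"
    and HG: "anticirculant_mat n B * ?G = ?F * mat_diag n (\<lambda>k. pow_sum B (inverse (?w ^ k)))"
    using anticirculant_mult_fourier[OF w B] anticirculant_mult_fourier[OF w' B] by (simp_all add: power_inverse)
  show ?thesis
    unfolding dih_cay_block_mat_def fourier_block_mat_def quadrant_diag_mat_def A_zeta_index
    by (simp add: XF XG HF HG mult_carrier_mat[OF fourier_mat_carrier mat_diag_dim]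
        mult_four_block_mat[OF circulant_mat_carrier anticirculant_mat_carrier anticirculant_mat_carrier
          circulant_mat_carrier fourier_mat_carrier zero_carrier_mat zero_carrier_mat fourier_mat_carrier]
        mult_four_block_mat[OF fourier_mat_carrier zero_carrier_mat zero_carrier_mat fourier_mat_carrier
          mat_diag_dim mat_diag_dim mat_diag_dim mat_diag_dim])
qed

lemma char_poly_dih_cay_block_mat:
  assumes n: "n > 0" and A: "A \<subseteq> {1..<n}" and B: "B \<subseteq> {..<n}" and A_closed: "\<forall>a\<in>A. n - a \<in> A"
  shows "char_poly (dih_cay_block_mat n A B) = (\<Prod>k<n. char_poly (A_zeta A B (prim_root n ^ k)))"
proof -
  let ?M = "dih_cay_block_mat n A B" and ?P = "fourier_block_mat n" and ?Q = "fourier_block_mat_inv n"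
    and ?D = "quadrant_diag_mat n (\<lambda>k. A_zeta A B (prim_root n ^ k))"
  have "?M = ?M * (?P * ?Q)"
    using fourier_block_mat_mult_inv[OF n] right_mult_one_mat[OF dih_cay_block_mat_carrier] by simp
  also have "\<dots> = ?M * ?P * ?Q"
    using assoc_mult_mat[OF dih_cay_block_mat_carrier fourier_block_mat_carrier fourier_block_mat_inv_carrier]
    by simp
  also have "\<dots> = ?P * ?D * ?Q" by (simp add: dih_cay_block_mat_mult_fourier[OF assms])
  finally have "?M = ?P * ?D * ?Q" .
  have "similar_mat ?M ?D"
    by (rule similar_matI[OF _ fourier_block_mat_mult_inv[OF n] fourier_block_mat_inv_mult[OF n]
          \<open>?M = ?P * ?D * ?Q\<close>]) simp
  then show ?thesis by (simp add: char_poly_similar char_poly_quadrant_diag_mat)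
qed

lemma mult_zero_eig_dih_cay_adj_matrix:
  assumes n: "n > 0" and A: "A \<subseteq> {1..<n}" and B: "B \<subseteq> {..<n}" and A_closed: "\<forall>a\<in>A. n - a \<in> A"
  shows "mult_zero_eig (dih_cay_adj_matrix n (dih_conn A B))
    = (\<Sum>k<n. mult_zero_eig (A_zeta A B (prim_root n ^ k)))"
proof -
  have "dih_cay_adj_matrix n (dih_conn A B) \<in> carrier_mat (2 * n) (2 * n)"
    by (simp add: dih_cay_adj_matrix_def)
  then have "mult_zero_eig (dih_cay_adj_matrix n (dih_conn A B)) = mult_zero_eig (dih_cay_block_mat n A B)"
    by (simp flip: mult_zero_eig_of_real of_real_dih_cay_adj_matrix)
  also have "\<dots> = order 0 (\<Prod>k<n. char_poly (A_zeta A B (prim_root n ^ k)))"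
    by (simp add: mult_zero_eig_def char_poly_dih_cay_block_mat[OF assms])
  also have "\<dots> = (\<Sum>k<n. mult_zero_eig (A_zeta A B (prim_root n ^ k)))"
    by (simp add: order_prod mult_zero_eig_def char_poly_dim_2)
  finally show ?thesis .
qed

lemma dih_cay_adj_kernel_fourier:
  assumes n: "n > 0" and A: "A \<subseteq> {1..<n}" and B: "B \<subseteq> {..<n}" and A_closed: "\<forall>a\<in>A. n - a \<in> A"
    and v: "v \<in> carrier_vec (2 * n)" and ker: "dih_cay_adj_matrix n (dih_conn A B) *\<^sub>v v = 0\<^sub>v (2 * n)"
  obtains w where "w \<in> carrier_vec (n + n)"
    and "quadrant_diag_mat n (\<lambda>k. A_zeta A B (prim_root n ^ k)) *\<^sub>v w = 0\<^sub>v (n + n)"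
    and "fourier_block_mat n *\<^sub>v w = map_vec complex_of_real v"
proof -
  define u where "u = map_vec complex_of_real v"
  have v': "v \<in> carrier_vec (n + n)" using v by (simp add: mult_2)
  then have u: "u \<in> carrier_vec (n + n)" by (simp add: u_def)
  have M: "dih_cay_adj_matrix n (dih_conn A B) \<in> carrier_mat (n + n) (n + n)"
    by (simp add: dih_cay_adj_matrix_def mult_2)
  have "dih_cay_block_mat n A B *\<^sub>v u = map_vec complex_of_real (dih_cay_adj_matrix n (dih_conn A B) *\<^sub>v v)"
    unfolding u_def of_real_dih_cay_adj_matrix[symmetric]
    by (rule of_real_hom.mult_mat_vec_hom[OF M v', symmetric])
  then have "dih_cay_block_mat n A B *\<^sub>v u = 0\<^sub>v (n + n)"
    unfolding ker mult_2 of_real_hom.vec_hom_zero .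
  moreover have "dih_cay_block_mat n A B * fourier_block_mat n
      = fourier_block_mat n * quadrant_diag_mat n (\<lambda>k. A_zeta A B (prim_root n ^ k))"
    by (rule dih_cay_block_mat_mult_fourier[OF n A B A_closed])
  ultimately show ?thesis
    using similar_kernel[OF dih_cay_block_mat_carrier quadrant_diag_mat_carrier fourier_block_mat_carrier
        fourier_block_mat_inv_carrier _ fourier_block_mat_inv_mult[OF n] fourier_block_mat_mult_inv[OF n] u]
      mult_mat_vec_carrier[OF fourier_block_mat_inv_carrier u] that
    unfolding u_def by blast
qed

(* The kernel of the diagonalised matrix lives on the coordinates k0 and n + k0; the Fourier
   block matrix spreads these two values over all coordinates, multiplied by roots of unity. *)
lemma dih_cay_adj_kernel_nowhere_zero:
  assumes n: "n > 0" and A: "A \<subseteq> {1..<n}" and B: "B \<subseteq> {..<n}" and A_closed: "\<forall>a\<in>A. n - a \<in> A"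
    and k0: "k0 < n" and simple: "mult_zero_eig (A_zeta A B (prim_root n ^ k0)) = 1"
    and invertible: "\<And>k. k < n \<Longrightarrow> k \<noteq> k0 \<Longrightarrow> det (A_zeta A B (prim_root n ^ k)) \<noteq> 0"
    and v: "v \<in> carrier_vec (2 * n)" and v0: "v \<noteq> 0\<^sub>v (2 * n)"
    and ker: "dih_cay_adj_matrix n (dih_conn A B) *\<^sub>v v = 0\<^sub>v (2 * n)"
  shows "\<forall>i < 2 * n. v $ i \<noteq> 0"
proof -
  obtain w where w: "w \<in> carrier_vec (n + n)"
    and Dw: "quadrant_diag_mat n (\<lambda>k. A_zeta A B (prim_root n ^ k)) *\<^sub>v w = 0\<^sub>v (n + n)"
    and Pw: "fourier_block_mat n *\<^sub>v w = map_vec complex_of_real v"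
    using dih_cay_adj_kernel_fourier[OF n A B A_closed v ker] .
  have outside: "w $ j = 0" if j: "j < n + n" "j \<noteq> k0" "j \<noteq> n + k0" for j
  proof (cases "j < n")
    case True
    show ?thesis
      by (rule quadrant_diag_mat_kernel_support(1)[OF w Dw True A_zeta_carrier invertible[OF True j(2)]])
  next
    case False
    define k where "k = j - n"
    have k: "k < n" "k \<noteq> k0" and jk: "j = n + k" using False j by (auto simp: k_def)
    show ?thesis
      unfolding jk by (rule quadrant_diag_mat_kernel_support(2)[OF w Dw k(1) A_zeta_carrier invertible[OF k]])
  qed
  let ?x = "w $ k0" and ?y = "w $ (n + k0)"
  have "pow_sum A (prim_root n ^ k0) + pow_sum A (prim_root n ^ k0) \<noteq> 0"
    using simple unfolding mult_zero_eig_dim_2[OF A_zeta_carrier] A_zeta_index by (simp split: if_splits)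
  then have "pow_sum A (prim_root n ^ k0) \<noteq> 0" by auto
  moreover have "pow_sum A (prim_root n ^ k0) * ?x + pow_sum B (inverse (prim_root n ^ k0)) * ?y = 0"
    and "pow_sum B (prim_root n ^ k0) * ?x + pow_sum A (prim_root n ^ k0) * ?y = 0"
    using quadrant_diag_mat_mult_vec[OF w k0, of "\<lambda>k. A_zeta A B (prim_root n ^ k)", unfolded A_zeta_index]
      Dw k0 by simp_all
  ultimately have xy: "?x = 0 \<longleftrightarrow> ?y = 0" by auto
  have v_entry: "complex_of_real (v $ i)
      = (if i < n then (prim_root n ^ k0) ^ i * ?x else (inverse (prim_root n) ^ k0) ^ (i - n) * ?y)"
    if "i < n + n" for i
    using fourier_block_mat_mult_vec_supported[OF w k0 outside that] Pw that v by (simp add: mult_2)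
  have v_zero_iff: "v $ i = 0 \<longleftrightarrow> ?x = 0" if "i < 2 * n" for i
  proof -
    have "v $ i = 0 \<longleftrightarrow> complex_of_real (v $ i) = 0" by simp
    also have "\<dots> \<longleftrightarrow> ?x = 0" using v_entry[of i] that xy by (simp add: mult_2)
    finally show ?thesis .
  qed
  have "?x \<noteq> 0"
  proof
    assume "?x = 0"
    then have "v = 0\<^sub>v (2 * n)" using v_zero_iff v by (intro eq_vecI) auto
    with v0 show False ..
  qed
  then show ?thesis using v_zero_iff by blast
qed

lemma is_nut_adj_dih_cay_adj_matrix_iff:
  assumes n: "n > 0" and A: "A \<subseteq> {1..<n}" and B: "B \<subseteq> {..<n}" and A_closed: "\<forall>a\<in>A. n - a \<in> A"
  shows "is_nut_adj (dih_cay_adj_matrix n (dih_conn A B))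
    \<longleftrightarrow> mult_zero_eig (dih_cay_adj_matrix n (dih_conn A B)) = 1"
proof -
  let ?M = "dih_cay_adj_matrix n (dih_conn A B)"
  have kernel: "\<forall>v \<in> carrier_vec (2 * n). v \<noteq> 0\<^sub>v (2 * n) \<and> ?M *\<^sub>v v = 0\<^sub>v (2 * n) \<longrightarrow> (\<forall>i < 2 * n. v $ i \<noteq> 0)"
    if simple_M: "mult_zero_eig ?M = 1"
  proof (intro ballI impI)
    have sum_1: "(\<Sum>k<n. mult_zero_eig (A_zeta A B (prim_root n ^ k))) = 1"
      using simple_M mult_zero_eig_dih_cay_adj_matrix[OF assms] by simp
    obtain k0 where "k0 \<in> {..<n}"
      and P: "mult_zero_eig (A_zeta A B (prim_root n ^ k0)) = 1 \<and>
        (\<forall>k\<in>{..<n}. k0 \<noteq> k \<longrightarrow> mult_zero_eig (A_zeta A B (prim_root n ^ k)) = 0)"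
      using iffD1[OF sum_eq_1_iff[OF finite_lessThan] sum_1] by (rule bexE)
    then have k0: "k0 < n" by simp
    have invertible: "det (A_zeta A B (prim_root n ^ k)) \<noteq> 0" if "k < n" "k \<noteq> k0" for k
      using conjunct2[OF P] that mult_zero_eig_A_zeta_eq_0_iff by simp
    fix v assume "v \<in> carrier_vec (2 * n)" "v \<noteq> 0\<^sub>v (2 * n) \<and> ?M *\<^sub>v v = 0\<^sub>v (2 * n)"
    then show "\<forall>i < 2 * n. v $ i \<noteq> 0"
      using dih_cay_adj_kernel_nowhere_zero[OF assms k0 conjunct1[OF P] invertible] by simp
  qed
  have "dim_row ?M = 2 * n" "dim_col ?M = 2 * n" by (simp_all add: dih_cay_adj_matrix_def)
  then show ?thesis unfolding is_nut_adj_def using kernel n by auto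
qed

theorem mainTheorem3:
  fixes n :: nat and A B :: "nat set"
  assumes "n \<ge> 3"
    and "A \<subseteq> {1..<n}" and "B \<subseteq> {0..<n}"
    and "\<forall>x \<in> dih_conn A B. dih_inv n x \<in> dih_conn A B"
  shows "is_nut_adj (dih_cay_adj_matrix n (dih_conn A B)) \<longleftrightarrow>
    ((\<exists>!z. z ^ n = 1 \<and> mult_zero_eig (A_zeta A B z) = 1) \<and>
     (\<forall>z. z ^ n = 1 \<and> mult_zero_eig (A_zeta A B z) \<noteq> 1 \<longrightarrow> det (A_zeta A B z) \<noteq> 0))"
proof -
  have n: "n > 0" and A: "A \<subseteq> {1..<n}" and B: "B \<subseteq> {..<n}" using assms(1-3) by auto
  have A_closed: "\<forall>a\<in>A. n - a \<in> A" by (rule dih_conn_rotation_inverse[OF A assms(4)])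
  have "is_nut_adj (dih_cay_adj_matrix n (dih_conn A B))
      \<longleftrightarrow> (\<Sum>k<n. mult_zero_eig (A_zeta A B (prim_root n ^ k))) = 1"
    using is_nut_adj_dih_cay_adj_matrix_iff[OF n A B A_closed] mult_zero_eig_dih_cay_adj_matrix[OF n A B A_closed]
    by simp
  also have "\<dots> \<longleftrightarrow> ((\<exists>!z. z ^ n = 1 \<and> mult_zero_eig (A_zeta A B z) = 1) \<and>
      (\<forall>z. z ^ n = 1 \<and> mult_zero_eig (A_zeta A B z) \<noteq> 1 \<longrightarrow> det (A_zeta A B z) \<noteq> 0))"
    by (rule roots_unity_unique_iff_sum_eq_1[OF n mult_zero_eig_A_zeta_eq_0_iff, symmetric])
  finally show ?thesis .
qed

end
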